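(* Let $v,z$ be independent $\mathcal{CN}(0,1)$ random variables, let $V>\frac{1}{\sqrt2}$, and define $u=\min(|v|,V)\,\frac{v}{|v|}$. Let $\rho\in\mathbb{C}$ with $|\rho|\in(0,1]$ and $\bar\rho=\sqrt{1-|\rho|^2}$. Then for every $a>0$, $$\mathbb{P}\big(|\rho u+\bar\rho z|>a\big)\ge \mathbb{P}\big(|v|>a\big)-2Ve^{-V^2}.$$
   Context: $\mathcal{CN}(0,1)$ denotes the circularly-symmetric complex Gaussian distribution with zero mean and unit variance. *)

theory Defs
  imports "HOL-Probability.Probability"
begin

definition cgauss_density :: "complex \<Rightarrow> real" where
  "cgauss_density z = exp (- (cmod z)\<^sup>2) / pi"

definition (in prob_space) std_complex_gaussian :: "('a \<Rightarrow> complex) \<Rightarrow> bool" where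
  "std_complex_gaussian X \<longleftrightarrow> distributed M lborel X (\<lambda>x. ennreal (cgauss_density x))"

end

(* For independent CN(0,1) variables v, z and |alpha|^2 + |beta|^2 = 1, the modulus of
   alpha v + beta z has the same tail as |v|, namely P(|.| > a) = exp (-a^2). The clipped
   variable u agrees with v off the event |v| > V, of probability exp (-V^2), so a union
   bound gives the claim even with exp (-V^2) in place of 2 V exp (-V^2); the hypothesis
   V > 1/sqrt 2 only serves to compare the two. The Gaussian tails are computed by a
   layer-cake argument over annuli, and the tail of |v + gamma z| by completing the square
   in the convolution integral. *)

theory Submission
  imports Defs
begin

lemma nn_integral_lborel_translate:
  fixes f :: "'a::euclidean_space \<Rightarrow> ennreal"
  assumes [measurable]: "f \<in> borel_measurable borel"
  shows "(\<integral>\<^sup>+x. f (c + x) \<partial>lborel) = (\<integral>\<^sup>+x. f x \<partial>lborel)"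
proof -
  have "(\<integral>\<^sup>+x. f (c + x) \<partial>lborel) = (\<integral>\<^sup>+x. f x \<partial>distr lborel borel ((+) c))"
    by (subst nn_integral_distr) auto
  also have "\<dots> = (\<integral>\<^sup>+x. f x \<partial>lborel)"
    by (simp add: lborel_distr_plus)
  finally show ?thesis .
qed

lemma nn_integral_exp_shifted_power:
  fixes c :: real
  shows "(\<integral>\<^sup>+s. indicator {c..} s * ennreal (exp (- s) * (s - c) ^ n) \<partial>lborel)
       = ennreal (fact n * exp (- c))"
proof -
  have "(\<integral>\<^sup>+s. indicator {c..} s * ennreal (exp (- s) * (s - c) ^ n) \<partial>lborel)
      = (\<integral>\<^sup>+s. ennreal (exp (- c)) * ennreal (exponential_density 1 s * s ^ n) \<partial>lborel)"
    by (subst nn_integral_lborel_translate[of _ c, symmetric])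
       (auto intro!: nn_integral_cong simp: erlang_density_def exp_add[symmetric]
             ennreal_mult[symmetric] split: split_indicator)
  also have "\<dots> = ennreal (exp (- c)) * ennreal (fact n)"
    using nn_integral_erlang_ith_moment[of 1 0 n] by (subst nn_integral_cmult) auto
  finally show ?thesis
    by (simp add: ennreal_mult[symmetric] mult.commute)
qed

lemma emeasure_lborel_complex_annulus:
  assumes t: "0 \<le> t"
  shows "emeasure lborel {x::complex. t < cmod x \<and> (cmod x)\<^sup>2 \<le> r} = ennreal (pi * (r - t\<^sup>2))"
proof (cases "t\<^sup>2 \<le> r")
  case True
  have "t \<le> sqrt r"
    using True by (rule real_le_rsqrt)
  have "(cmod x)\<^sup>2 \<le> r \<longleftrightarrow> cmod x \<le> sqrt r" for x :: complex
    using sqrt_ge_absD[of "cmod x" r] real_le_rsqrt[of "cmod x" r] by auto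
  then have "{x::complex. t < cmod x \<and> (cmod x)\<^sup>2 \<le> r} = {x. t < cmod x \<and> cmod x \<le> sqrt r}"
    by blast
  also have "\<dots> = cball 0 (sqrt r) - cball 0 t"
    by auto
  also have "emeasure lborel \<dots>
      = emeasure lborel (cball (0::complex) (sqrt r)) - emeasure lborel (cball (0::complex) t)"
    using t \<open>t \<le> sqrt r\<close> by (intro emeasure_Diff) (auto simp: emeasure_cball)
  also have "\<dots> = ennreal (pi * r) - ennreal (pi * t\<^sup>2)"
    using t True by (simp add: emeasure_cball unit_ball_vol_2 order.trans[OF zero_le_power2])
  also have "\<dots> = ennreal (pi * (r - t\<^sup>2))"
    using True by (subst ennreal_minus) (auto simp: algebra_simps)
  finally show ?thesis .
next
  case False
  have "t\<^sup>2 \<le> (cmod x)\<^sup>2" if "t < cmod x" for x :: complex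
    using t that by (intro power_mono) auto
  then have "{x::complex. t < cmod x \<and> (cmod x)\<^sup>2 \<le> r} = {}"
    using False by force
  moreover have "pi * (r - t\<^sup>2) \<le> 0"
    using False by (intro mult_nonneg_nonpos) auto
  ultimately show ?thesis
    by (simp del: Collect_empty_eq add: ennreal_neg)
qed

lemma nn_integral_gauss_norm_gt:
  fixes c t :: real
  assumes c: "0 < c" and t: "0 \<le> t"
  shows "(\<integral>\<^sup>+x. ennreal (exp (- c * (cmod x)\<^sup>2)) * indicator {x. t < cmod x} x
           \<partial>(lborel::complex measure))
       = ennreal (pi / c * exp (- c * t\<^sup>2))"
proof -
  \<comment> \<open>Layer cake: \<open>exp (- c * (cmod x)\<^sup>2)\<close> is the integral of \<open>exp (- s)\<close> over
    \<open>s \<ge> c * (cmod x)\<^sup>2\<close>; after Fubini the inner integrals are areas of annuli.\<close>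
  define h where "h = (\<lambda>(x::complex, s::real).
    indicator {x. t < cmod x \<and> c * (cmod x)\<^sup>2 \<le> s} x * ennreal (exp (- s)))"
  have [measurable]: "h \<in> borel_measurable (lborel \<Otimes>\<^sub>M lborel)"
    unfolding h_def by measurable
  have "(\<integral>\<^sup>+x. ennreal (exp (- c * (cmod x)\<^sup>2)) * indicator {x. t < cmod x} x \<partial>lborel)
      = (\<integral>\<^sup>+x. (\<integral>\<^sup>+s. h (x, s) \<partial>lborel) \<partial>lborel)"
  proof (intro nn_integral_cong)
    fix x :: complex
    have "(\<integral>\<^sup>+s. h (x, s) \<partial>lborel)
        = indicator {x. t < cmod x} x * (\<integral>\<^sup>+s. indicator {c * (cmod x)\<^sup>2..} s *
            ennreal (exp (- s) * (s - c * (cmod x)\<^sup>2) ^ 0) \<partial>lborel)"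
      by (subst nn_integral_cmult[symmetric])
         (auto intro!: nn_integral_cong simp: h_def split: split_indicator)
    then show "ennreal (exp (- c * (cmod x)\<^sup>2)) * indicator {x. t < cmod x} x
        = (\<integral>\<^sup>+s. h (x, s) \<partial>lborel)"
      by (simp only: nn_integral_exp_shifted_power) (simp add: mult.commute)
  qed
  also have "\<dots> = (\<integral>\<^sup>+s. (\<integral>\<^sup>+x. h (x, s) \<partial>lborel) \<partial>lborel)"
    by (rule lborel_pair.Fubini'[symmetric]) simp
  also have "\<dots> = (\<integral>\<^sup>+s. ennreal (pi / c) *
      (indicator {c * t\<^sup>2..} s * ennreal (exp (- s) * (s - c * t\<^sup>2) ^ 1)) \<partial>lborel)"
  proof (intro nn_integral_cong)
    fix s :: real
    have "(\<integral>\<^sup>+x. h (x, s) \<partial>lborel)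
        = (\<integral>\<^sup>+x. ennreal (exp (- s)) * indicator {x. t < cmod x \<and> c * (cmod x)\<^sup>2 \<le> s} x \<partial>lborel)"
      by (intro nn_integral_cong) (simp add: h_def mult.commute)
    also have "\<dots> = ennreal (exp (- s)) *
        emeasure lborel {x::complex. t < cmod x \<and> c * (cmod x)\<^sup>2 \<le> s}"
      by (rule nn_integral_cmult_indicator) measurable
    also have "{x::complex. t < cmod x \<and> c * (cmod x)\<^sup>2 \<le> s}
        = {x. t < cmod x \<and> (cmod x)\<^sup>2 \<le> s / c}"
      using c by (simp add: pos_le_divide_eq mult.commute)
    also have "emeasure lborel \<dots> = ennreal (pi * (s / c - t\<^sup>2))"
      using t by (rule emeasure_lborel_complex_annulus)
    also have "ennreal (exp (- s)) * \<dots>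
        = ennreal (pi / c) * (indicator {c * t\<^sup>2..} s * ennreal (exp (- s) * (s - c * t\<^sup>2) ^ 1))"
      using c by (cases "c * t\<^sup>2 \<le> s")
        (auto simp: ennreal_neg ennreal_mult'[symmetric] field_simps mult_nonneg_nonpos)
    finally show "(\<integral>\<^sup>+x. h (x, s) \<partial>lborel) = \<dots>" .
  qed
  also have "\<dots> = ennreal (pi / c * exp (- c * t\<^sup>2))"
    using nn_integral_exp_shifted_power[of "c * t\<^sup>2" 1] c
    by (subst nn_integral_cmult) (auto simp: ennreal_mult'[symmetric])
  finally show ?thesis .
qed

lemma nn_integral_gauss_translate:
  fixes c :: real and \<gamma> :: complex
  assumes c: "0 < c"
  shows "(\<integral>\<^sup>+y. ennreal (exp (- c * (cmod (y - \<gamma>))\<^sup>2)) \<partial>lborel) = ennreal (pi / c)"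
proof -
  have "(\<integral>\<^sup>+y. ennreal (exp (- c * (cmod (y - \<gamma>))\<^sup>2)) \<partial>lborel)
      = (\<integral>\<^sup>+y. ennreal (exp (- c * (cmod y)\<^sup>2)) \<partial>lborel)"
    using nn_integral_lborel_translate[of "\<lambda>y. ennreal (exp (- c * (cmod (y - \<gamma>))\<^sup>2))" \<gamma>]
    by simp
  also have "\<dots> = (\<integral>\<^sup>+y. ennreal (exp (- c * (cmod y)\<^sup>2)) * indicator {y. 0 < cmod y} y \<partial>lborel)"
    using AE_lborel_singleton[of "0::complex"]
    by (intro nn_integral_cong_AE) (auto elim!: eventually_mono)
  also have "\<dots> = ennreal (pi / c)"
    using nn_integral_gauss_norm_gt[OF c, of 0] by simp
  finally show ?thesis .
qed

lemma cmod_completing_square: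
  fixes x y \<beta> :: complex
  defines "k \<equiv> 1 + (cmod \<beta>)\<^sup>2"
  shows "(cmod y)\<^sup>2 + (cmod (x - \<beta> * y))\<^sup>2 = k * (cmod (y - x * cnj \<beta> / k))\<^sup>2 + (cmod x)\<^sup>2 / k"
proof -
  have k: "k > 0"
    unfolding k_def by (simp add: add_pos_nonneg)
  have k_cnj: "complex_of_real k = 1 + \<beta> * cnj \<beta>"
    unfolding k_def of_real_add of_real_1 complex_norm_square ..
  have "k * ((cmod y)\<^sup>2 + (cmod (x - \<beta> * y))\<^sup>2) = (cmod (k * y - x * cnj \<beta>))\<^sup>2 + (cmod x)\<^sup>2"
    by (rule of_real_eq_iff[where 'a=complex, THEN iffD1])
       (simp only: of_real_add of_real_mult complex_norm_square k_cnj complex_cnj_diff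
          complex_cnj_add complex_cnj_mult complex_cnj_cnj complex_cnj_one; algebra)
  also have "k * y - x * cnj \<beta> = complex_of_real k * (y - x * cnj \<beta> / k)"
    using k by (simp add: field_simps)
  also have "cmod \<dots> = k * cmod (y - x * cnj \<beta> / k)"
    using k by (simp add: norm_mult)
  finally show ?thesis
    using k by (simp add: field_simps power2_eq_square)
qed

lemma cgauss_density_nonneg: "0 \<le> cgauss_density x"
  by (simp add: cgauss_density_def)

lemma borel_measurable_cgauss_density [measurable]: "cgauss_density \<in> borel_measurable borel"
  unfolding cgauss_density_def[abs_def] by measurable

lemma nn_integral_cgauss_density_convolution:
  fixes x \<beta> :: complex
  defines "k \<equiv> 1 + (cmod \<beta>)\<^sup>2"
  shows "(\<integral>\<^sup>+y. ennreal (cgauss_density y * cgauss_density (x - \<beta> * y)) \<partial>lborel)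
       = ennreal (exp (- (cmod x)\<^sup>2 / k) / (pi * k))"
proof -
  have k: "k > 0"
    unfolding k_def by (simp add: add_pos_nonneg)
  have "cgauss_density y * cgauss_density (x - \<beta> * y)
      = exp (- (cmod x)\<^sup>2 / k) / pi\<^sup>2 * exp (- k * (cmod (y - x * cnj \<beta> / k))\<^sup>2)" for y
    using cmod_completing_square[of y x \<beta>]
    by (simp add: cgauss_density_def k_def exp_add[symmetric] power2_eq_square field_simps)
  then have "(\<integral>\<^sup>+y. ennreal (cgauss_density y * cgauss_density (x - \<beta> * y)) \<partial>lborel)
      = ennreal (exp (- (cmod x)\<^sup>2 / k) / pi\<^sup>2) *
          (\<integral>\<^sup>+y. ennreal (exp (- k * (cmod (y - x * cnj \<beta> / k))\<^sup>2)) \<partial>lborel)"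
    by (subst nn_integral_cmult[symmetric]) (auto simp: ennreal_mult[symmetric])
  also have "\<dots> = ennreal (exp (- (cmod x)\<^sup>2 / k) / (pi * k))"
    using k by (subst nn_integral_gauss_translate) (auto simp: ennreal_mult[symmetric] power2_eq_square)
  finally show ?thesis .
qed

lemma nn_integral_cgauss_sum_norm_gt:
  fixes \<gamma> :: complex and t :: real
  assumes t: "0 \<le> t"
  shows "(\<integral>\<^sup>+y. \<integral>\<^sup>+x. ennreal (cgauss_density x) * ennreal (cgauss_density y) *
            indicator {x. t < cmod (x + \<gamma> * y)} x \<partial>lborel \<partial>lborel)
       = ennreal (exp (- t\<^sup>2 / (1 + (cmod \<gamma>)\<^sup>2)))"
proof -
  define k where "k = 1 + (cmod \<gamma>)\<^sup>2"
  have k: "0 < k"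
    unfolding k_def by (simp add: add_pos_nonneg)
  have "(\<integral>\<^sup>+x. ennreal (cgauss_density x) * ennreal (cgauss_density y) *
            indicator {x. t < cmod (x + \<gamma> * y)} x \<partial>lborel)
      = (\<integral>\<^sup>+x. ennreal (cgauss_density y * cgauss_density (x - \<gamma> * y)) *
            indicator {x. t < cmod x} x \<partial>lborel)" for y
  proof -
    have "(\<integral>\<^sup>+x. ennreal (cgauss_density x) * ennreal (cgauss_density y) *
            indicator {x. t < cmod (x + \<gamma> * y)} x \<partial>lborel)
      = (\<integral>\<^sup>+x. ennreal (cgauss_density y * cgauss_density ((\<gamma> * y + x) - \<gamma> * y)) *
            indicator {x. t < cmod x} (\<gamma> * y + x) \<partial>lborel)"
      by (intro nn_integral_cong)
         (simp add: ennreal_mult cgauss_density_nonneg add.commute mult.commute split: split_indicator)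
    also have "\<dots> = (\<integral>\<^sup>+x. ennreal (cgauss_density y * cgauss_density (x - \<gamma> * y)) *
            indicator {x. t < cmod x} x \<partial>lborel)"
      by (rule nn_integral_lborel_translate) measurable
    finally show ?thesis .
  qed
  then have "(\<integral>\<^sup>+y. \<integral>\<^sup>+x. ennreal (cgauss_density x) * ennreal (cgauss_density y) *
            indicator {x. t < cmod (x + \<gamma> * y)} x \<partial>lborel \<partial>lborel)
      = (\<integral>\<^sup>+y. \<integral>\<^sup>+x. ennreal (cgauss_density y * cgauss_density (x - \<gamma> * y)) *
            indicator {x. t < cmod x} x \<partial>lborel \<partial>lborel)"
    by (simp only:)
  also have "\<dots> = (\<integral>\<^sup>+x. \<integral>\<^sup>+y. ennreal (cgauss_density y * cgauss_density (x - \<gamma> * y)) *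
            indicator {x. t < cmod x} x \<partial>lborel \<partial>lborel)"
    by (rule lborel_pair.Fubini') measurable
  also have "\<dots> = (\<integral>\<^sup>+x. ennreal (1 / (pi * k)) *
            (ennreal (exp (- (1 / k) * (cmod x)\<^sup>2)) * indicator {x. t < cmod x} x) \<partial>lborel)"
    by (intro nn_integral_cong)
       (simp add: nn_integral_multc nn_integral_cgauss_density_convolution k_def
          ennreal_mult'[symmetric] mult.assoc[symmetric])
  also have "\<dots> = ennreal (1 / (pi * k)) * ennreal (pi / (1 / k) * exp (- (1 / k) * t\<^sup>2))"
    using k t by (subst nn_integral_cmult, simp, subst nn_integral_gauss_norm_gt) auto
  also have "\<dots> = ennreal (exp (- t\<^sup>2 / (1 + (cmod \<gamma>)\<^sup>2)))"
    using k by (simp add: k_def ennreal_mult'[symmetric])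
  finally show ?thesis .
qed

lemma nn_integral_cgauss_density_norm_gt:
  assumes "0 \<le> t"
  shows "(\<integral>\<^sup>+x. ennreal (cgauss_density x) * indicator {x. t < cmod x} x \<partial>lborel)
       = ennreal (exp (- t\<^sup>2))"
proof -
  have "(\<integral>\<^sup>+x. ennreal (cgauss_density x) * indicator {x. t < cmod x} x \<partial>lborel)
      = (\<integral>\<^sup>+x. ennreal (1 / pi) *
          (ennreal (exp (- (cmod x)\<^sup>2)) * indicator {x. t < cmod x} x) \<partial>lborel)"
    by (intro nn_integral_cong) (simp add: cgauss_density_def ennreal_mult'[symmetric] mult.assoc[symmetric])
  also have "\<dots> = ennreal (exp (- t\<^sup>2))"
    using assms nn_integral_gauss_norm_gt[of 1 t]
    by (subst nn_integral_cmult) (auto simp: ennreal_mult'[symmetric])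
  finally show ?thesis .
qed

context prob_space
begin

lemma indep_var_lborel_iff:
  fixes X Y :: "'a \<Rightarrow> 'b::euclidean_space"
  shows "indep_var lborel X lborel Y \<longleftrightarrow> indep_var borel X borel Y"
  by (simp add: indep_var_def indep_vars_def2 bool.case_eq_if)

lemma std_complex_gaussian_prob_norm_gt:
  assumes "std_complex_gaussian X" and "0 \<le> t"
  shows "prob {\<omega> \<in> space M. t < cmod (X \<omega>)} = exp (- t\<^sup>2)"
proof -
  have "{\<omega> \<in> space M. t < cmod (X \<omega>)} = X -` {x. t < cmod x} \<inter> space M"
    by auto
  then have "emeasure M {\<omega> \<in> space M. t < cmod (X \<omega>)} = ennreal (exp (- t\<^sup>2))"
    using assms distributed_emeasure[of M lborel X "\<lambda>x. ennreal (cgauss_density x)" "{x. t < cmod x}"]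
    by (simp add: std_complex_gaussian_def nn_integral_cgauss_density_norm_gt)
  then show ?thesis
    by (simp add: emeasure_eq_measure)
qed

lemma std_complex_gaussian_sum_prob_norm_gt:
  assumes X: "std_complex_gaussian X" and Y: "std_complex_gaussian Y"
    and indep: "indep_var borel X borel Y" and t: "0 \<le> t"
  shows "prob {\<omega> \<in> space M. t < cmod (X \<omega> + \<gamma> * Y \<omega>)} = exp (- t\<^sup>2 / (1 + (cmod \<gamma>)\<^sup>2))"
proof -
  define A where "A = {p. t < cmod (fst p + \<gamma> * snd p)}"
  have A_sets: "A \<in> sets (lborel \<Otimes>\<^sub>M lborel)"
  proof -
    have "{p \<in> space (lborel \<Otimes>\<^sub>M lborel). t < cmod (fst p + \<gamma> * snd p)} \<in> sets (lborel \<Otimes>\<^sub>M lborel)"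
      by measurable
    then show ?thesis
      by (simp add: A_def space_pair_measure)
  qed
  have joint: "distributed M (lborel \<Otimes>\<^sub>M lborel) (\<lambda>\<omega>. (X \<omega>, Y \<omega>))
      (\<lambda>(x, y). ennreal (cgauss_density x) * ennreal (cgauss_density y))"
    using X Y indep unfolding std_complex_gaussian_def indep_var_lborel_iff[symmetric]
    by (intro distributed_joint_indep) (auto intro: sigma_finite_lborel)
  have "{\<omega> \<in> space M. t < cmod (X \<omega> + \<gamma> * Y \<omega>)} = (\<lambda>\<omega>. (X \<omega>, Y \<omega>)) -` A \<inter> space M"
    by (auto simp: A_def)
  then have "emeasure M {\<omega> \<in> space M. t < cmod (X \<omega> + \<gamma> * Y \<omega>)}
      = (\<integral>\<^sup>+p. (\<lambda>(x, y). ennreal (cgauss_density x) * ennreal (cgauss_density y)) p * indicator A p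
           \<partial>(lborel \<Otimes>\<^sub>M lborel))"
    by (simp only: distributed_emeasure[OF joint A_sets])
  also have "\<dots> = (\<integral>\<^sup>+y. \<integral>\<^sup>+x. ennreal (cgauss_density x) * ennreal (cgauss_density y) *
            indicator {x. t < cmod (x + \<gamma> * y)} x \<partial>lborel \<partial>lborel)"
    by (subst lborel_pair.nn_integral_snd[symmetric])
       (auto simp: A_def split: split_indicator intro!: nn_integral_cong)
  also have "\<dots> = ennreal (exp (- t\<^sup>2 / (1 + (cmod \<gamma>)\<^sup>2)))"
    using t by (rule nn_integral_cgauss_sum_norm_gt)
  finally show ?thesis
    by (simp add: emeasure_eq_measure)
qed

lemma std_complex_gaussian_lincomb_prob_norm_gt:
  assumes "std_complex_gaussian X" "std_complex_gaussian Y" "indep_var borel X borel Y"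
    and \<alpha>: "\<alpha> \<noteq> 0" and unit: "(cmod \<alpha>)\<^sup>2 + (cmod \<beta>)\<^sup>2 = 1" and t: "0 \<le> t"
  shows "prob {\<omega> \<in> space M. t < cmod (\<alpha> * X \<omega> + \<beta> * Y \<omega>)} = exp (- t\<^sup>2)"
proof -
  have "t < cmod (\<alpha> * x + \<beta> * y) \<longleftrightarrow> t / cmod \<alpha> < cmod (x + \<beta> / \<alpha> * y)" for x y
  proof -
    have "\<alpha> * x + \<beta> * y = \<alpha> * (x + \<beta> / \<alpha> * y)"
      using \<alpha> by (simp add: distrib_left)
    then have "cmod (\<alpha> * x + \<beta> * y) = cmod \<alpha> * cmod (x + \<beta> / \<alpha> * y)"
      by (simp add: norm_mult)
    then show ?thesis
      using \<alpha> by (simp add: pos_divide_less_eq mult.commute)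
  qed
  then have "{\<omega> \<in> space M. t < cmod (\<alpha> * X \<omega> + \<beta> * Y \<omega>)}
      = {\<omega> \<in> space M. t / cmod \<alpha> < cmod (X \<omega> + \<beta> / \<alpha> * Y \<omega>)}"
    by (simp only:)
  moreover have "- (t / cmod \<alpha>)\<^sup>2 / (1 + (cmod (\<beta> / \<alpha>))\<^sup>2) = - t\<^sup>2"
    using \<alpha> unit by (simp add: norm_divide power_divide field_simps)
  ultimately show ?thesis
    using std_complex_gaussian_sum_prob_norm_gt[OF assms(1-3) divide_nonneg_nonneg[OF t norm_ge_zero[of \<alpha>]]]
    by (simp only:)
qed

end

theorem lemma3:
  fixes M :: "'a measure" and v z :: "'a \<Rightarrow> complex"
    and V a :: real and \<rho> :: complex
  assumes "prob_space M"
    and "prob_space.std_complex_gaussian M v"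
    and "prob_space.std_complex_gaussian M z"
    and "prob_space.indep_var M borel v borel z"
    and "V > 1 / sqrt 2"
    and "0 < cmod \<rho>" and "cmod \<rho> \<le> 1"
    and "a > 0"
  shows "measure M {\<omega> \<in> space M.
            cmod (\<rho> * (complex_of_real (min (cmod (v \<omega>)) V) * (v \<omega> / complex_of_real (cmod (v \<omega>))))
                  + complex_of_real (sqrt (1 - (cmod \<rho>)\<^sup>2)) * z \<omega>) > a}
         \<ge> measure M {\<omega> \<in> space M. cmod (v \<omega>) > a} - 2 * V * exp (- V\<^sup>2)"
    (is "measure M ?clipped \<ge> _")
proof -
  interpret prob_space M by fact
  define s where "s = complex_of_real (sqrt (1 - (cmod \<rho>)\<^sup>2))"
  have [measurable]: "v \<in> borel_measurable M" "z \<in> borel_measurable M"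
    using assms(2,3) by (auto simp: std_complex_gaussian_def dest: distributed_measurable)
  have "1 / 2 \<le> 1 / sqrt (2::real)"
    using sqrt2_less_2 by (intro divide_left_mono) auto
  then have V: "1 \<le> 2 * V"
    using assms(5) by linarith
  have polar: "complex_of_real (cmod w) * (w / complex_of_real (cmod w)) = w" for w :: complex
    by (cases "w = 0") auto
  have "{\<omega> \<in> space M. a < cmod (\<rho> * v \<omega> + s * z \<omega>)} \<subseteq> ?clipped \<union> {\<omega> \<in> space M. V < cmod (v \<omega>)}"
    by (auto simp: s_def not_less polar simp del: times_divide_eq_right)
  then have "measure M {\<omega> \<in> space M. a < cmod (\<rho> * v \<omega> + s * z \<omega>)}
      \<le> measure M ?clipped + measure M {\<omega> \<in> space M. V < cmod (v \<omega>)}"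
    by (intro order.trans[OF finite_measure_mono measure_Un_le]) auto
  moreover have "(cmod \<rho>)\<^sup>2 + (cmod s)\<^sup>2 = 1"
    using assms(7) power_le_one[of "cmod \<rho>" 2] by (simp add: s_def)
  then have "measure M {\<omega> \<in> space M. a < cmod (\<rho> * v \<omega> + s * z \<omega>)} = exp (- a\<^sup>2)"
    using assms by (intro std_complex_gaussian_lincomb_prob_norm_gt) auto
  moreover have "measure M {\<omega> \<in> space M. a < cmod (v \<omega>)} = exp (- a\<^sup>2)"
    using assms by (intro std_complex_gaussian_prob_norm_gt) auto
  moreover have "measure M {\<omega> \<in> space M. V < cmod (v \<omega>)} = exp (- V\<^sup>2)"
    using assms V by (intro std_complex_gaussian_prob_norm_gt) auto
  moreover have "exp (- V\<^sup>2) \<le> 2 * V * exp (- V\<^sup>2)"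
    using V by simp
  ultimately show ?thesis
    by linarith
qed

end
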